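(* Let $q$ be a power of an odd prime, write $q-1=2^s r$ with $r$ odd, let $c\in\mathbb{F}_q^*$, and $f(X)=c(X^{q+1}-X^2)$ on $\mathbb{F}_{q^2}$. Then for every divisor $d$ of $r$ there are $\frac{\varphi(d)(q-1)}{2\,\mathrm{ord}_{3d}(4)}$ cycles of length $2\,\mathrm{ord}_{3d}(4)$ in the functional graph of $f$, and these are the only cycles of length greater than $1$.
   Context: The functional graph of $f$ is the directed graph on $\mathbb{F}_{q^2}$ with edges $x\to f(x)$. $\varphi$ is Euler's totient function and $\mathrm{ord}_m(n)$ is the multiplicative order of $n$ modulo $m$. *)

theory Defs
  imports "HOL-Number_Theory.Number_Theory"
begin

definition has_least_period :: "('a \<Rightarrow> 'a) \<Rightarrow> nat \<Rightarrow> 'a \<Rightarrow> bool" where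
  "has_least_period f n x \<longleftrightarrow> 0 < n \<and> (f ^^ n) x = x \<and> (\<forall>m. 0 < m \<and> m < n \<longrightarrow> (f ^^ m) x \<noteq> x)"

definition cycles_of_length :: "('a \<Rightarrow> 'a) \<Rightarrow> nat \<Rightarrow> 'a set set" where
  "cycles_of_length f n = {{(f ^^ i) x | i. i < n} | x. has_least_period f n x}"

end

theory Submission
  imports Defs "HOL-Combinatorics.Orbits"
begin

(* Write f x = c x skew x with skew x = x^q - x, and let tr x = x + x^q. Since tr x and
   (skew x)^2 lie in F_q, the F_q-valued multiplier  m x = -c^3 (tr x) (skew x)^2  satisfies
   f (f x) = m x * x  and  m (f (f x)) = (m x)^4,  hence  f^(2n) x = (m x)^((4^n - 1)/3) * x.
   An odd iterate never returns to x when m x is nonzero: it would give a^2 c skew x = 1 with a in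
   F_q, but the q-th power of the left side is its negative. Points with m x = 0 reach 0 after two
   steps. So x has least period L > 1 iff m x is nonzero and L = 2 ord_(3d)(4), d the order of m x;
   such an order exists only for odd d, and d divides q - 1, so d divides r. Finally skew is a
   bijection from each fibre of m over F_q^* onto the q - 1 elements y with y^q = -y, and F_q^*
   has totient d elements of order d. *)

section \<open>Cycles of a self-map\<close>

lemma card_orbit_if_has_least_period:
  assumes "has_least_period f n x"
  shows "card (orbit f x) = n"
proof -
  have n: "0 < n" "(f ^^ n) x = x" and least: "\<And>m. 0 < m \<Longrightarrow> m < n \<Longrightarrow> (f ^^ m) x \<noteq> x"
    using assms by (auto simp: has_least_period_def)
  have "inj_on (\<lambda>i. (f ^^ i) x) {..<n}"
  proof (rule inj_onI, rule ccontr)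
    fix a b assume a: "a \<in> {..<n}" and b: "b \<in> {..<n}" and eq: "(f ^^ a) x = (f ^^ b) x" and "a \<noteq> b"
    have *: "(f ^^ (n - j + i)) x = x" if "i < j" "j < n" "(f ^^ i) x = (f ^^ j) x" for i j
    proof -
      have "(f ^^ (n - j + i)) x = (f ^^ (n - j)) ((f ^^ i) x)"
        by (simp only: funpow_add comp_apply)
      also have "\<dots> = (f ^^ (n - j + j)) x"
        using that(3) by (simp only: funpow_add comp_apply)
      also have "\<dots> = x"
        using that(2) n(2) by simp
      finally show ?thesis .
    qed
    show False
      using \<open>a \<noteq> b\<close> least *[of a b] *[of b a] a b eq by (cases "a < b") auto
  qed
  moreover have "orbit f x = (\<lambda>i. (f ^^ i) x) ` {..<n}"
    using orbit_altdef_bounded[OF n(2) n(1)] by auto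
  ultimately show ?thesis
    by (simp add: card_image)
qed

lemma has_least_period_Least:
  assumes "(f ^^ m) x = x" and "0 < m"
  shows "has_least_period f (LEAST m. 0 < m \<and> (f ^^ m) x = x) x"
proof -
  let ?l = "LEAST m. 0 < m \<and> (f ^^ m) x = x"
  have "0 < ?l \<and> (f ^^ ?l) x = x"
    by (rule LeastI[of _ m]) (use assms in simp)
  moreover have "(f ^^ k) x \<noteq> x" if "0 < k" and "k < ?l" for k
    using not_less_Least[OF that(2)] that(1) by blast
  ultimately show ?thesis
    unfolding has_least_period_def by blast
qed

lemma has_least_period_iff_card_orbit:
  "has_least_period f n x \<longleftrightarrow> x \<in> orbit f x \<and> card (orbit f x) = n"
proof
  assume per: "has_least_period f n x"
  then have "x = (f ^^ n) x \<and> 0 < n"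
    by (simp add: has_least_period_def)
  then have "x \<in> orbit f x"
    unfolding orbit_altdef by blast
  then show "x \<in> orbit f x \<and> card (orbit f x) = n"
    using card_orbit_if_has_least_period[OF per] by simp
next
  assume x: "x \<in> orbit f x \<and> card (orbit f x) = n"
  have "\<exists>m. 0 < m \<and> (f ^^ m) x = x"
    using x by (force simp: orbit_altdef)
  then obtain m where "(f ^^ m) x = x" and "0 < m"
    by blast
  then have per: "has_least_period f (LEAST m. 0 < m \<and> (f ^^ m) x = x) x"
    by (rule has_least_period_Least)
  then have "n = (LEAST m. 0 < m \<and> (f ^^ m) x = x)"
    using card_orbit_if_has_least_period[OF per] x by simp
  then show "has_least_period f n x"
    using per by simp
qed

lemma orbit_eq_if_mem_periodic_orbit:
  assumes x: "x \<in> orbit f x" and y: "y \<in> orbit f x"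
  shows "orbit f y = orbit f x"
proof
  show "orbit f y \<subseteq> orbit f x"
    using orbit_trans[OF _ y] by blast
  have "x \<in> orbit f y"
    using orbit_swap[OF x y] .
  then show "orbit f x \<subseteq> orbit f y"
    using orbit_trans[of _ f x y] by blast
qed

lemma cycles_of_length_eq_orbits:
  "cycles_of_length f n = orbit f ` {x. has_least_period f n x}"
proof -
  have "orbit f x = {(f ^^ i) x | i. i < n}" if "has_least_period f n x" for x
    using that by (simp add: has_least_period_def orbit_altdef_bounded)
  then show ?thesis
    unfolding cycles_of_length_def by auto
qed

lemma card_cycles_of_length:
  fixes f :: "'a::finite \<Rightarrow> 'a"
  shows "n * card (cycles_of_length f n) = card {x. has_least_period f n x}"
proof -
  let ?P = "{x. has_least_period f n x}"
  have periodic: "x \<in> orbit f x" "card (orbit f x) = n" if "x \<in> ?P" for x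
    using that by (simp_all add: has_least_period_iff_card_orbit)
  have closed: "y \<in> ?P" if "x \<in> ?P" and "y \<in> orbit f x" for x y
    using that periodic orbit_eq_if_mem_periodic_orbit
    by (metis has_least_period_iff_card_orbit mem_Collect_eq)
  have "n * card (orbit f ` ?P) = card (\<Union> (orbit f ` ?P))"
  proof (rule card_partition)
    show "card c = n" if "c \<in> orbit f ` ?P" for c
      using that periodic by auto
    show "c1 \<inter> c2 = {}" if c1: "c1 \<in> orbit f ` ?P" and c2: "c2 \<in> orbit f ` ?P"
      and distinct: "c1 \<noteq> c2" for c1 c2
    proof (rule ccontr)
      obtain x1 x2 where x: "x1 \<in> ?P" "x2 \<in> ?P" and c: "c1 = orbit f x1" "c2 = orbit f x2"
        using c1 c2 by blast
      assume "c1 \<inter> c2 \<noteq> {}"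
      then obtain z where "z \<in> orbit f x1" "z \<in> orbit f x2"
        using c by blast
      then have "orbit f x1 = orbit f x2"
        using orbit_eq_if_mem_periodic_orbit periodic(1) x by metis
      then show False
        using distinct c by simp
    qed
  qed simp_all
  also have "\<Union> (orbit f ` ?P) = ?P"
    using periodic(1) closed by blast
  finally show ?thesis
    by (simp add: cycles_of_length_eq_orbits)
qed


section \<open>Finite fields\<close>

text \<open>The field \<open>'a\<close> as a HOL-Algebra ring, to reuse the library's theory of element orders
  in finite groups.\<close>

definition field_ring :: "'a::field ring" where
  "field_ring = \<lparr>carrier = UNIV, mult = (*), one = 1, zero = 0, add = (+)\<rparr>"

lemma field_ring_simps [simp]:
  "carrier field_ring = UNIV"
  "\<zero>\<^bsub>field_ring\<^esub> = 0" "\<one>\<^bsub>field_ring\<^esub> = 1"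
  "x \<otimes>\<^bsub>field_ring\<^esub> y = x * y" "x \<oplus>\<^bsub>field_ring\<^esub> y = x + y"
  by (simp_all add: field_ring_def)

lemma field_field_ring: "field (field_ring :: 'a::field ring)"
proof -
  have "cring (field_ring :: 'a ring)"
    unfolding field_ring_def
    by unfold_locales (auto simp: algebra_simps Units_def intro: exI[of _ "- x" for x])
  moreover have "Units (field_ring :: 'a ring) = carrier field_ring - {\<zero>\<^bsub>field_ring\<^esub>}"
    by (auto simp: Units_def) (metis left_inverse right_inverse)
  ultimately show ?thesis
    by (rule cring.cring_fieldI)
qed

abbreviation field_units :: "'a::field monoid" where
  "field_units \<equiv> mult_of field_ring"

text \<open>For \<open>x = 0\<close>, which lies outside the group, \<open>mult_order x\<close> is a junk value.\<close>

definition mult_order :: "'a::field \<Rightarrow> nat" where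
  "mult_order x = group.ord field_units x"

lemma group_field_units: "group (field_units :: 'a::field monoid)"
  using field.field_mult_group[OF field_field_ring] .

lemma pow_field_ring [simp]: "x [^]\<^bsub>field_ring\<^esub> (n::nat) = (x::'a::field) ^ n"
  by (induction n) simp_all

lemma pow_field_units [simp]: "x [^]\<^bsub>field_units\<^esub> (n::nat) = (x::'a::field) ^ n"
  by (simp add: nat_pow_mult_of)

lemma order_field_units:
  "order (field_units :: 'a::{field,finite} monoid) = card (UNIV :: 'a set) - 1"
  by (simp add: order_def card_Diff_subset)

lemma power_eq_1_iff_mult_order_dvd:
  assumes "x \<noteq> 0"
  shows "x ^ n = 1 \<longleftrightarrow> mult_order x dvd n"
  using group.pow_eq_id[OF group_field_units, of x n] assms by (simp add: mult_order_def)

lemma power_card_minus_1_eq_1: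
  assumes "(x::'a::{field,finite}) \<noteq> 0"
  shows "x ^ (card (UNIV :: 'a set) - 1) = 1"
  using group.pow_order_eq_1[OF group_field_units, of x] assms
  by (simp add: order_field_units)

lemma power_card_eq_self: "(x::'a::{field,finite}) ^ card (UNIV :: 'a set) = x"
proof (cases "x = 0")
  case False
  then show ?thesis
    using power_card_minus_1_eq_1[OF False] power_Suc2[of x "card (UNIV :: 'a set) - 1"]
      finite_UNIV_card_ge_0[where 'a = 'a] by simp
qed (simp add: finite_UNIV_card_ge_0)

lemma two_le_card_UNIV_field: "2 \<le> card (UNIV :: 'a::{field,finite} set)"
  using card_mono[of "UNIV :: 'a set" "{0, 1}"] by simp

lemma card_mult_order_eq_totient:
  assumes d: "d dvd card (UNIV :: 'a::{field,finite} set) - 1"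
  shows "card {x::'a. x \<noteq> 0 \<and> mult_order x = d} = totient d"
proof -
  interpret R: field "field_ring :: 'a ring"
    by (rule field_field_ring)
  interpret G: group "field_units :: 'a monoid"
    by (rule group_field_units)
  have "finite (carrier (field_ring :: 'a ring))"
    by simp
  from R.finite_field_mult_group_has_gen[OF this] obtain a :: 'a
    where a: "a \<in> carrier field_units"
      and gen: "carrier field_units = {a [^]\<^bsub>field_ring\<^esub> i | i::nat. i \<in> UNIV}"
    by blast
  have "generate field_units {a} = carrier field_units"
    using G.generate_pow_on_finite_carrier[OF _ a] gen by simp
  then have "G.ord a = card (UNIV - {0::'a})"
    using G.generate_pow_card[OF a] by simp
  then have ord_a: "G.ord a = card (UNIV :: 'a set) - 1"
    by (simp add: card_Diff_subset)
  obtain k where k: "card (UNIV :: 'a set) - 1 = d * k"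
    using d by blast
  have "d * k \<noteq> 0"
    using k two_le_card_UNIV_field[where 'a = 'a] by linarith
  then have "k \<noteq> 0" "d \<noteq> 0"
    by simp_all
  then have "G.ord (a [^]\<^bsub>field_units\<^esub> k) = d"
    using G.ord_pow[OF a, of k] ord_a k by simp
  then have "card {x \<in> carrier field_units. G.ord x = d} = phi' d"
    using a d by (intro R.num_elems_of_ord_eq_phi') (auto simp: order_field_units)
  moreover have "phi' d = totient d"
    unfolding phi'_def totient_def totatives_def by (rule arg_cong[where f = card]) auto
  ultimately show ?thesis
    by (simp add: mult_order_def conj_commute)
qed

lemma card_roots_of_unity:
  assumes m: "m dvd card (UNIV :: 'a::{field,finite} set) - 1"
  shows "card {x::'a. x \<noteq> 0 \<and> x ^ m = 1} = m"
proof -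
  have "m \<noteq> 0"
    using m two_le_card_UNIV_field[where 'a = 'a] by (intro notI) simp
  have "{x::'a. x \<noteq> 0 \<and> x ^ m = 1} = (\<Union>d \<in> {d. d dvd m}. {x. x \<noteq> 0 \<and> mult_order x = d})"
    using power_eq_1_iff_mult_order_dvd by auto
  also have "card \<dots> = (\<Sum>d | d dvd m. card {x::'a. x \<noteq> 0 \<and> mult_order x = d})"
    by (rule card_UN_disjoint) (use \<open>m \<noteq> 0\<close> in auto)
  also have "\<dots> = (\<Sum>d | d dvd m. totient d)"
    using m by (intro sum.cong refl card_mult_order_eq_totient) (auto dest: dvd_trans)
  also have "\<dots> = m"
    by (rule totient_divisor_sum)
  finally show ?thesis .
qed

lemma CHAR_eq_if_card_UNIV_eq_prime_power:
  assumes p: "prime p" and card: "card (UNIV :: 'a::{field,finite} set) = p ^ n"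
  shows "CHAR('a) = p"
proof -
  have "prime CHAR('a)"
    by (intro prime_CHAR_semidom finite_imp_CHAR_pos) simp
  moreover have "CHAR('a) dvd p ^ n"
    using CHAR_dvd_CARD[where 'a = 'a] card by simp
  ultimately show ?thesis
    using p by (metis prime_dvd_power primes_dvd_imp_eq)
qed


section \<open>Elementary number theory\<close>

lemma odd_dvd_iff_dvd_odd_part:
  fixes n r d :: nat
  assumes "n = 2 ^ s * r" and "odd r"
  shows "odd d \<and> d dvd n \<longleftrightarrow> d dvd r"
proof
  assume "odd d \<and> d dvd n"
  then have "coprime d (2 ^ s)" and "d dvd 2 ^ s * r"
    using assms(1) by auto
  then show "d dvd r"
    using coprime_dvd_mult_right_iff by blast
qed (use assms in \<open>auto dest: dvd_trans\<close>)

fun repunit4 :: "nat \<Rightarrow> nat" where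
  "repunit4 0 = 0"
| "repunit4 (Suc n) = 4 * repunit4 n + 1"

lemma three_mult_repunit4: "3 * repunit4 n + 1 = 4 ^ n"
  by (induction n) auto

lemma dvd_repunit4_iff:
  assumes "0 < n"
  shows "d dvd repunit4 n \<longleftrightarrow> ord (3 * d) 4 dvd n"
proof -
  have "4 ^ n - 1 = 3 * repunit4 n"
    using three_mult_repunit4[of n] by simp
  then have "[4 ^ n = 1] (mod 3 * d) \<longleftrightarrow> d dvd repunit4 n"
    by (simp add: cong_altdef_nat)
  then show ?thesis
    using ord_divides by blast
qed

lemma odd_if_ord_3_mult_4_nonzero:
  assumes "ord (3 * d) (4::nat) \<noteq> 0"
  shows "odd d"
  using assms by (auto simp: ord_eq_0)


section \<open>The map \<open>c (x^(q+1) - x^2)\<close>\<close>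

locale norm_minus_square_map =
  fixes p k q :: nat and c :: "'a::{field,finite}" and f :: "'a \<Rightarrow> 'a"
  assumes prime_p: "prime p" and odd_p: "odd p" and q_def: "q = p ^ k"
    and card_UNIV: "card (UNIV :: 'a set) = q ^ 2"
    and c_pow_q: "c ^ q = c" and c_nonzero: "c \<noteq> 0"
    and f_def: "\<And>x. f x = c * (x ^ (q + 1) - x ^ 2)"
begin

lemma odd_q: "odd q"
  using odd_p by (simp add: q_def)

lemma q_ge_3: "3 \<le> q"
proof -
  have "2 \<le> q ^ 2"
    using two_le_card_UNIV_field[where 'a = 'a] by (simp add: card_UNIV)
  then have "q \<noteq> 1"
    by (intro notI) simp
  then show ?thesis
    using odd_q by presburger
qed

lemma CHAR_eq: "CHAR('a) = p"
  using CHAR_eq_if_card_UNIV_eq_prime_power[OF prime_p, where 'a = 'a and n = "k * 2"]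
  by (simp add: card_UNIV q_def power_mult)

lemma two_nonzero: "(2::'a) \<noteq> 0"
proof
  assume "(2::'a) = 0"
  then have "p dvd 2"
    using of_nat_eq_0_iff_char_dvd[of 2, where 'a = 'a] by (simp add: CHAR_eq)
  then show False
    using odd_p primes_dvd_imp_eq[OF prime_p two_is_prime_nat] by simp
qed

lemma frobenius_add: "(x + y :: 'a) ^ q = x ^ q + y ^ q"
  by (rule freshmans_dream') (simp_all add: CHAR_eq prime_p q_def)

lemma frobenius_minus: "(- x :: 'a) ^ q = - (x ^ q)"
  using odd_q by simp

lemma frobenius_diff: "(x - y :: 'a) ^ q = x ^ q - y ^ q"
  using frobenius_add[of x "- y"] by (simp add: frobenius_minus)

lemma frobenius_frobenius: "(x ^ q) ^ q = (x::'a)"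
  using power_card_eq_self[of x] by (simp add: card_UNIV power2_eq_square power_mult)

lemma power_q_split: "(x::'a) ^ q = x ^ (q - 1) * x"
  using q_ge_3 by (simp flip: power_Suc2)

lemma power_q_eq_self_iff:
  assumes "(x::'a) \<noteq> 0"
  shows "x ^ q = x \<longleftrightarrow> mult_order x dvd q - 1"
  using assms by (simp add: power_q_split power_eq_1_iff_mult_order_dvd flip: power_eq_1_iff_mult_order_dvd)

definition tr :: "'a \<Rightarrow> 'a" where
  "tr x = x + x ^ q"

definition skew :: "'a \<Rightarrow> 'a" where
  "skew x = x ^ q - x"

definition multiplier :: "'a \<Rightarrow> 'a" where
  "multiplier x = - (c ^ 3) * tr x * skew x ^ 2"

lemma power_q_commute: "((y::'a) ^ n) ^ q = (y ^ q) ^ n"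
  by (simp flip: power_mult add: mult.commute)

lemma tr_pow_q: "tr x ^ q = tr x"
  by (simp add: tr_def frobenius_add frobenius_frobenius add.commute)

lemma skew_pow_q: "skew x ^ q = - skew x"
  by (simp add: skew_def frobenius_diff frobenius_frobenius)

lemma multiplier_pow_q: "multiplier x ^ q = multiplier x"
  by (simp add: multiplier_def power_mult_distrib frobenius_minus power_q_commute
      c_pow_q tr_pow_q skew_pow_q)

lemma f_eq: "f x = c * x * skew x"
  by (simp add: f_def skew_def power_add power2_eq_square algebra_simps)

lemma f_0: "f 0 = 0"
  by (simp add: f_eq)

lemma skew_f: "skew (f x) = - c * tr x * skew x"
proof -
  have "skew (f x) = c ^ q * x ^ q * skew x ^ q - c * x * skew x"
    unfolding skew_def[of "f x"] by (simp only: f_eq power_mult_distrib)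
  also have "\<dots> = - c * tr x * skew x"
    by (simp add: c_pow_q skew_pow_q tr_def algebra_simps)
  finally show ?thesis .
qed

lemma f_f: "f (f x) = multiplier x * x"
  by (simp add: f_eq[of "f x"] skew_f) (simp add: f_eq multiplier_def power2_eq_square power3_eq_cube algebra_simps)

lemma multiplier_scale:
  assumes "\<kappa> ^ q = \<kappa>"
  shows "multiplier (\<kappa> * x) = \<kappa> ^ 3 * multiplier x"
  using assms by (simp add: multiplier_def tr_def skew_def power_mult_distrib power2_eq_square
      power3_eq_cube algebra_simps)

lemma multiplier_f_f: "multiplier (f (f x)) = multiplier x ^ 4"
  by (simp add: f_f multiplier_scale multiplier_pow_q power_numeral_reduce)

lemma funpow_even: "(f ^^ (2 * n)) x = multiplier x ^ repunit4 n * x"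
proof (induction n arbitrary: x)
  case (Suc n)
  have "(f ^^ (2 * Suc n)) x = (f ^^ (2 * n)) ((f ^^ 2) x)"
    by (simp only: mult_Suc_right add.commute[of 2] funpow_add comp_apply)
  also have "\<dots> = (f ^^ (2 * n)) (f (f x))"
    by (simp add: numeral_2_eq_2)
  also have "\<dots> = (multiplier x ^ 4) ^ repunit4 n * (multiplier x * x)"
    by (simp only: Suc.IH multiplier_f_f) (simp only: f_f)
  also have "\<dots> = multiplier x ^ (4 * repunit4 n + 1) * x"
    by (simp only: power_add power_mult power_one_right mult.assoc)
  finally show ?case
    by simp
qed simp

lemma funpow_odd_neq:
  assumes "multiplier x \<noteq> 0"
  shows "(f ^^ (2 * n + 1)) x \<noteq> x"
proof
  define \<kappa> where "\<kappa> = multiplier x ^ repunit4 n"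
  have \<kappa>: "\<kappa> ^ q = \<kappa>"
    by (simp add: \<kappa>_def power_q_commute multiplier_pow_q)
  have x: "x \<noteq> 0" "skew x \<noteq> 0"
    using assms q_ge_3 by (auto simp: multiplier_def skew_def)
  assume "(f ^^ (2 * n + 1)) x = x"
  then have "c * (\<kappa> * x) * skew (\<kappa> * x) = x"
    by (simp add: funpow_even f_eq \<kappa>_def)
  then have "x * (\<kappa> ^ 2 * c * skew x) = x * 1"
    using \<kappa> by (simp add: skew_def power_mult_distrib power2_eq_square algebra_simps)
  then have one: "\<kappa> ^ 2 * c * skew x = 1"
    using x by simp
  have "(1::'a) = (\<kappa> ^ 2 * c * skew x) ^ q"
    by (simp add: one)
  also have "\<dots> = - (\<kappa> ^ 2 * c * skew x)"
    by (simp add: power_mult_distrib power_q_commute \<kappa> c_pow_q skew_pow_q)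
  finally have "(1::'a) = - 1"
    by (simp add: one)
  then have "(2::'a) = 0"
    by (metis eq_neg_iff_add_eq_0 one_add_one)
  then show False
    using two_nonzero by simp
qed

lemma funpow_multiplier_0:
  assumes "multiplier x = 0" and "2 \<le> m"
  shows "(f ^^ m) x = 0"
proof -
  have "(f ^^ m) x = (f ^^ (m - 2)) ((f ^^ 2) x)"
    using assms(2) by (metis le_add_diff_inverse2 funpow_add comp_apply)
  moreover have "(f ^^ j) 0 = 0" for j
    by (induction j) (simp_all add: f_0)
  ultimately show ?thesis
    using assms(1) by (simp add: f_f numeral_2_eq_2)
qed

lemma card_UNIV_minus_1: "card (UNIV :: 'a set) - 1 = (q - 1) * (q + 1)"
  by (simp add: card_UNIV power2_eq_square algebra_simps)

lemma funpow_eq_self_iff: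
  assumes "multiplier x \<noteq> 0" and "0 < m"
  shows "(f ^^ m) x = x \<longleftrightarrow> even m \<and> ord (3 * mult_order (multiplier x)) 4 dvd m div 2"
proof (cases "even m")
  case False
  then show ?thesis
    using funpow_odd_neq[OF assms(1), of "m div 2"] by simp
next
  case True
  then have m: "m = 2 * (m div 2)" and "0 < m div 2"
    using assms(2) by auto
  have "x \<noteq> 0"
    using assms(1) q_ge_3 by (auto simp: multiplier_def skew_def)
  then have "(f ^^ m) x = x \<longleftrightarrow> multiplier x ^ repunit4 (m div 2) = 1"
    by (subst m, subst funpow_even) simp
  also have "\<dots> \<longleftrightarrow> ord (3 * mult_order (multiplier x)) 4 dvd m div 2"
    using assms(1) \<open>0 < m div 2\<close> by (simp add: power_eq_1_iff_mult_order_dvd dvd_repunit4_iff)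
  finally show ?thesis
    using True by simp
qed

lemma has_least_period_iff_multiplier:
  assumes "1 < L"
  shows "has_least_period f L x \<longleftrightarrow>
    multiplier x \<noteq> 0 \<and> L = 2 * ord (3 * mult_order (multiplier x)) 4"
proof
  assume per: "has_least_period f L x"
  then have fix_L: "(f ^^ L) x = x" and least: "\<And>m. 0 < m \<Longrightarrow> m < L \<Longrightarrow> (f ^^ m) x \<noteq> x"
    by (auto simp: has_least_period_def)
  have nonzero: "multiplier x \<noteq> 0"
  proof
    assume "multiplier x = 0"
    then have "x = 0"
      using funpow_multiplier_0 assms fix_L by fastforce
    then show False
      using least[of 1] assms by (simp add: f_0)
  qed
  define t where "t = ord (3 * mult_order (multiplier x)) 4"
  have "even L" and o_dvd: "t dvd L div 2"
    using funpow_eq_self_iff[OF nonzero] fix_L assms by (auto simp: t_def)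
  then have "0 < t"
    using assms by (intro gr0I) auto
  then have "(f ^^ (2 * t)) x = x"
    using funpow_eq_self_iff[OF nonzero] by (simp add: t_def)
  then have "\<not> 2 * t < L"
    using least \<open>0 < t\<close> by auto
  moreover have "t \<le> L div 2"
    using o_dvd assms \<open>even L\<close> by (intro dvd_imp_le) auto
  ultimately show "multiplier x \<noteq> 0 \<and> L = 2 * ord (3 * mult_order (multiplier x)) 4"
    using nonzero \<open>even L\<close> by (auto simp: t_def)
next
  assume "multiplier x \<noteq> 0 \<and> L = 2 * ord (3 * mult_order (multiplier x)) 4"
  then have nonzero: "multiplier x \<noteq> 0" and L: "L = 2 * ord (3 * mult_order (multiplier x)) 4"
    by auto
  have "(f ^^ L) x = x \<longleftrightarrow> even L \<and> ord (3 * mult_order (multiplier x)) 4 dvd L div 2"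
    using assms by (intro funpow_eq_self_iff[OF nonzero]) simp
  then have "(f ^^ L) x = x"
    using L by simp
  moreover have "(f ^^ m) x \<noteq> x" if "0 < m" "m < L" for m
  proof
    assume "(f ^^ m) x = x"
    then have "even m" "ord (3 * mult_order (multiplier x)) 4 dvd m div 2"
      using funpow_eq_self_iff[OF nonzero that(1)] by simp_all
    moreover have "0 < m div 2"
      using that \<open>even m\<close> by auto
    ultimately show False
      using that L by (auto dest: dvd_imp_le)
  qed
  ultimately show "has_least_period f L x"
    using assms by (simp add: has_least_period_def)
qed

lemma card_skew_values: "card {y::'a. y \<noteq> 0 \<and> y ^ q = - y} = q - 1"
proof -
  have "y ^ q = - y \<longleftrightarrow> y ^ (q - 1) = - 1" if "y \<noteq> 0" for y :: 'a
  proof -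
    have "y ^ q = - y \<longleftrightarrow> y ^ (q - 1) * y = - 1 * y"
      by (simp add: power_q_split)
    also have "\<dots> \<longleftrightarrow> y ^ (q - 1) = - 1"
      using that by (simp only: mult_cancel_right) simp
    finally show ?thesis .
  qed
  moreover have "y ^ (2 * (q - 1)) = 1 \<longleftrightarrow> y ^ (q - 1) = 1 \<or> y ^ (q - 1) = - 1" for y :: 'a
  proof -
    have "y ^ (2 * (q - 1)) = (y ^ (q - 1)) ^ 2"
      by (simp flip: power_mult add: mult.commute)
    then show ?thesis
      by (simp add: power2_eq_1_iff)
  qed
  ultimately have eq: "{y::'a. y \<noteq> 0 \<and> y ^ q = - y} =
      {y. y \<noteq> 0 \<and> y ^ (2 * (q - 1)) = 1} - {y. y \<noteq> 0 \<and> y ^ (q - 1) = 1}"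
    using two_nonzero by (auto simp: eq_neg_iff_add_eq_0)
  obtain t where "q + 1 = 2 * t"
    using odd_q by (metis evenE odd_even_add odd_one)
  then have "card (UNIV :: 'a set) - 1 = 2 * (q - 1) * t"
    using card_UNIV_minus_1 by simp
  then have dvd: "2 * (q - 1) dvd card (UNIV :: 'a set) - 1" "q - 1 dvd card (UNIV :: 'a set) - 1"
    by simp_all
  have "{y::'a. y \<noteq> 0 \<and> y ^ (q - 1) = 1} \<subseteq> {y. y \<noteq> 0 \<and> y ^ (2 * (q - 1)) = 1}"
    by (auto simp: power_mult mult.commute[of 2])
  then have "card {y::'a. y \<noteq> 0 \<and> y ^ q = - y} =
      card {y::'a. y \<noteq> 0 \<and> y ^ (2 * (q - 1)) = 1} - card {y::'a. y \<noteq> 0 \<and> y ^ (q - 1) = 1}"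
    unfolding eq by (intro card_Diff_subset) auto
  also have "\<dots> = 2 * (q - 1) - (q - 1)"
    by (simp only: card_roots_of_unity[OF dvd(1)] card_roots_of_unity[OF dvd(2)])
  finally show ?thesis
    by simp
qed

lemma card_multiplier_fibre:
  assumes "\<mu> \<noteq> 0" and "\<mu> ^ q = \<mu>"
  shows "card {x. multiplier x = \<mu>} = q - 1"
proof -
  \<comment> \<open>\<open>x = (tr x - skew x) / 2\<close>, and \<open>tr x = - \<mu> / (c^3 (skew x)^2)\<close> on the fibre\<close>
  define tr_of where "tr_of y = - \<mu> / (c ^ 3 * y ^ 2)" for y
  define g where "g y = (tr_of y - y) / 2" for y
  let ?S = "{y::'a. y \<noteq> 0 \<and> y ^ q = - y}"
  have g: "skew (g y) = y \<and> multiplier (g y) = \<mu>" if "y \<in> ?S" for y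
  proof -
    have y: "y \<noteq> 0" "y ^ q = - y"
      using that by auto
    have "tr_of y ^ q = tr_of y"
      by (simp add: tr_of_def power_divide frobenius_minus power_mult_distrib power_q_commute
          assms(2) c_pow_q y(2))
    then have "g y ^ q = (tr_of y + y) / 2"
      by (simp add: g_def power_divide frobenius_diff y(2) frobenius_add[of 1 1, simplified])
    then have "skew (g y) = y" "tr (g y) = tr_of y"
      by (simp_all add: skew_def tr_def g_def field_simps two_nonzero)
    then show ?thesis
      by (simp add: multiplier_def tr_of_def field_simps c_nonzero y(1))
  qed
  have "bij_betw skew {x. multiplier x = \<mu>} ?S"
  proof (rule bij_betw_byWitness[where f' = g])
    show "\<forall>x \<in> {x. multiplier x = \<mu>}. g (skew x) = x"
    proof
      fix x assume "x \<in> {x. multiplier x = \<mu>}"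
      then have x: "multiplier x = \<mu>"
        by simp
      then have "skew x \<noteq> 0" "tr x \<noteq> 0"
        using assms(1) by (auto simp: multiplier_def)
      then have "tr_of (skew x) = tr x"
        using x by (auto simp: tr_of_def multiplier_def field_simps c_nonzero)
      then show "g (skew x) = x"
        by (simp add: g_def tr_def skew_def field_simps two_nonzero)
    qed
    show "skew ` {x. multiplier x = \<mu>} \<subseteq> ?S"
      using assms(1) skew_pow_q by (auto simp: multiplier_def)
  qed (use g in auto)
  then show ?thesis
    using card_skew_values by (simp add: bij_betw_same_card)
qed

lemma card_has_least_period:
  assumes "1 < L"
  shows "card {x. has_least_period f L x} =
    (q - 1) * (\<Sum>d | d dvd q - 1 \<and> 2 * ord (3 * d) 4 = L. totient d)"
proof -
  let ?D = "{d. d dvd q - 1 \<and> 2 * ord (3 * d) 4 = L}"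
  let ?U = "{\<mu>::'a. \<mu> \<noteq> 0 \<and> mult_order \<mu> \<in> ?D}"
  have "finite ?D"
    using q_ge_3 by simp
  have "{x. has_least_period f L x} = (\<Union>\<mu> \<in> ?U. {x. multiplier x = \<mu>})"
    using has_least_period_iff_multiplier[OF assms] power_q_eq_self_iff multiplier_pow_q by auto
  then have "card {x. has_least_period f L x} = (\<Sum>\<mu> \<in> ?U. card {x. multiplier x = \<mu>})"
    by (simp only:) (rule card_UN_disjoint, auto)
  also have "\<dots> = (q - 1) * card ?U"
    using card_multiplier_fibre power_q_eq_self_iff by simp
  also have "?U = (\<Union>d \<in> ?D. {\<mu>. \<mu> \<noteq> 0 \<and> mult_order \<mu> = d})"
    by auto
  also have "card \<dots> = (\<Sum>d \<in> ?D. card {\<mu>::'a. \<mu> \<noteq> 0 \<and> mult_order \<mu> = d})"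
    using \<open>finite ?D\<close> by (rule card_UN_disjoint) auto
  also have "\<dots> = (\<Sum>d \<in> ?D. totient d)"
    using card_UNIV_minus_1 by (intro sum.cong refl card_mult_order_eq_totient) auto
  finally show ?thesis .
qed

lemma real_card_cycles_of_length:
  assumes "1 < L"
  shows "real (card (cycles_of_length f L)) =
    (\<Sum>d | d dvd q - 1 \<and> 2 * ord (3 * d) 4 = L.
        real (totient d) * real (q - 1) / real (2 * ord (3 * d) (4::nat)))"
proof -
  let ?D = "{d. d dvd q - 1 \<and> 2 * ord (3 * d) 4 = L}"
  have "L * card (cycles_of_length f L) = card {x. has_least_period f L x}"
    by (rule card_cycles_of_length)
  also have "\<dots> = (q - 1) * (\<Sum>d \<in> ?D. totient d)"
    by (rule card_has_least_period[OF assms])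
  finally have "real (card (cycles_of_length f L)) = real ((q - 1) * (\<Sum>d \<in> ?D. totient d)) / real L"
    using assms by (simp add: field_simps flip: of_nat_mult)
  also have "\<dots> = (\<Sum>d \<in> ?D. real (totient d) * real (q - 1) / real L)"
    by (simp add: sum_distrib_left sum_divide_distrib mult.commute)
  also have "\<dots> = (\<Sum>d \<in> ?D. real (totient d) * real (q - 1) / real (2 * ord (3 * d) (4::nat)))"
    by (intro sum.cong) auto
  finally show ?thesis .
qed

end

theorem theorem9:
  fixes p k q s r :: nat and c :: "'a :: {field, finite}" and f :: "'a \<Rightarrow> 'a"
  assumes "prime p" and "odd p" and "k \<ge> 1" and "q = p ^ k"
    and "card (UNIV :: 'a set) = q ^ 2"
    and "q - 1 = 2 ^ s * r" and "odd r"
    and "c ^ q = c" and "c \<noteq> 0"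
    and "\<And>x. f x = c * (x ^ (q + 1) - x ^ 2)"
  shows "\<forall>L > 1. real (card (cycles_of_length f L)) =
           (\<Sum>d \<in> {d. d dvd r \<and> 2 * ord (3 * d) 4 = L}.
               real (totient d) * real (q - 1) / real (2 * ord (3 * d) (4::nat)))"
proof (intro allI impI)
  fix L :: nat
  assume "1 < L"
  interpret norm_minus_square_map p k q c f
    by (unfold_locales; fact assms)
  have "d dvd q - 1 \<longleftrightarrow> d dvd r" if "2 * ord (3 * d) 4 = L" for d
  proof -
    have "odd d"
      using that \<open>1 < L\<close> by (intro odd_if_ord_3_mult_4_nonzero) auto
    then show ?thesis
      using odd_dvd_iff_dvd_odd_part[OF assms(6,7)] by blast
  qed
  then have "{d. d dvd q - 1 \<and> 2 * ord (3 * d) 4 = L} = {d. d dvd r \<and> 2 * ord (3 * d) 4 = L}"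
    by blast
  then show "real (card (cycles_of_length f L)) =
      (\<Sum>d \<in> {d. d dvd r \<and> 2 * ord (3 * d) 4 = L}.
          real (totient d) * real (q - 1) / real (2 * ord (3 * d) (4::nat)))"
    using real_card_cycles_of_length[OF \<open>1 < L\<close>] by simp
qed

end
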